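(* In the finite-horizon setting below, fix $(s,a)\in\mathcal{K}$ and a policy $\pi=(\pi_0,\dots,\pi_{H-1})$. Define $u^\pi,u^*\in\mathbb{R}^H$ by $u_h^\pi=(\widehat{P}_\mathcal{K}(\cdot|s,a)-P(\cdot|s,a))\widehat{V}^\pi_{h+1}$ and $u_h^*=(\widehat{P}_\mathcal{K}(\cdot|s,a)-P(\cdot|s,a))\widehat{V}^*_{h+1}$ for $h\in\{0,\dots,H-1\}$. Then for all $h\in\{0,\dots,H-1\}$: $$\widehat{Q}_h^\pi=\widetilde{Q}^\pi_{h,u^\pi},\quad\widehat{Q}_h^*=\widetilde{Q}^{\widehat{\pi}^*}_{h,u^*}=\widetilde{Q}^*_{h,u^*},\quad|u_h^\pi|\le H-h-1,\quad|u_h^*|\le H-h-1.$$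
   Context: A finite-horizon MDP $(\mathcal{S},\mathcal{A},P,(r_h)_{h<H},H)$ has finite $\mathcal{S},\mathcal{A}$, transition kernel $P$, horizon $H$ and step-dependent rewards $r_h$. For a nonstationary policy $\pi=(\pi_0,\dots,\pi_{H-1})$, $\pi_h:\mathcal{S}\to\mathcal{A}$: $V_H^\pi\equiv0$, $Q_h^\pi(s',a')=r_h(s',a')+\sum_{s''}P(s''|s',a')V_{h+1}^\pi(s'')$, $V_h^\pi(s')=Q_h^\pi(s',\pi_h(s'))$; optimal functions $V_h^*,Q_h^*$ are the maxima over policies, attained by an optimal policy. The true model $M$ has stationary reward $r\in[0,1]$ and $P(s'|s,a)=\sum_k\phi_k(s,a)\psi_k(s')$ with the anchor-state assumption: anchors $\mathcal{K}=\{(s_k,a_k)\}_{k=1}^K$, $\lambda_k^{s,a}\ge0$, $\sum_k\lambda_k^{s,a}=1$, $\phi(s,a)=\sum_k\lambda_k^{s,a}\phi(s_k,a_k)$. $\widehat{P}_\mathcal{K}(\cdot|s_k,a_k)$ is the empirical distribution of $N$ samples from $P(\cdot|s_k,a_k)$; $\widehat{M}$ has kernel $\widehat{P}(s'|s'',a'')=\sum_k\lambda_k^{s'',a''}\widehat{P}_\mathcal{K}(s'|s_k,a_k)$ and reward $r$ at every step; hats denote its value/Q-functions, $\widehat{\pi}^*$ is its optimal policy. Auxiliary model: for $(s,a)=(s_j,a_j)\in\mathcal{K}$ and $u=(u_0,\dots,u_{H-1})\in\mathbb{R}^H$, $\widetilde{M}_{s,a,u}$ has kernel $\widetilde{P}(s'|s'',a'')=\sum_k\lambda_k^{s'',a''}\widetilde{P}_\mathcal{K}(s'|s_k,a_k)$,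 with $\widetilde{P}_\mathcal{K}=\widehat{P}_\mathcal{K}$ on anchors $k\ne j$ and $\widetilde{P}_\mathcal{K}(\cdot|s_j,a_j)=P(\cdot|s,a)$, and step-$h$ reward $r+u_h\Lambda^{s,a}$ where $\Lambda^{s,a}(s'',a'')=\lambda_j^{s'',a''}$. $\widetilde{Q}^\pi_{h,u}$, $\widetilde{Q}^*_{h,u}$ denote its Q-functions at step $h$. *)

theory Defs
  imports Complex_Main
begin

function Vpi :: "('s::finite \<Rightarrow> 'a \<Rightarrow> 's \<Rightarrow> real) \<Rightarrow> (nat \<Rightarrow> 's \<Rightarrow> 'a \<Rightarrow> real) \<Rightarrow> nat
      \<Rightarrow> (nat \<Rightarrow> 's \<Rightarrow> 'a) \<Rightarrow> nat \<Rightarrow> 's \<Rightarrow> real" where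
  "Vpi Pk R H pol h s =
     (if h < H then R h s (pol h s) + (\<Sum>s''\<in>UNIV. Pk s (pol h s) s'' * Vpi Pk R H pol (Suc h) s'')
      else 0)"
  by pat_completeness auto
termination
  by (relation "measure (\<lambda>(Pk, R, H, pol, h, s). H - h)") auto

definition Qpi :: "('s::finite \<Rightarrow> 'a \<Rightarrow> 's \<Rightarrow> real) \<Rightarrow> (nat \<Rightarrow> 's \<Rightarrow> 'a \<Rightarrow> real) \<Rightarrow> nat
      \<Rightarrow> (nat \<Rightarrow> 's \<Rightarrow> 'a) \<Rightarrow> nat \<Rightarrow> 's \<Rightarrow> 'a \<Rightarrow> real" where
  "Qpi Pk R H pol h s a = R h s a + (\<Sum>s''\<in>UNIV. Pk s a s'' * Vpi Pk R H pol (Suc h) s'')"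

definition Vopt :: "('s::finite \<Rightarrow> 'a \<Rightarrow> 's \<Rightarrow> real) \<Rightarrow> (nat \<Rightarrow> 's \<Rightarrow> 'a \<Rightarrow> real) \<Rightarrow> nat
      \<Rightarrow> nat \<Rightarrow> 's \<Rightarrow> real" where
  "Vopt Pk R H h s = (SUP pol. Vpi Pk R H pol h s)"

definition Qopt :: "('s::finite \<Rightarrow> 'a \<Rightarrow> 's \<Rightarrow> real) \<Rightarrow> (nat \<Rightarrow> 's \<Rightarrow> 'a \<Rightarrow> real) \<Rightarrow> nat
      \<Rightarrow> nat \<Rightarrow> 's \<Rightarrow> 'a \<Rightarrow> real" where
  "Qopt Pk R H h s a = (SUP pol. Qpi Pk R H pol h s a)"

definition optimal_policy :: "('s::finite \<Rightarrow> 'a \<Rightarrow> 's \<Rightarrow> real) \<Rightarrow> (nat \<Rightarrow> 's \<Rightarrow> 'a \<Rightarrow> real) \<Rightarrow> nat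
      \<Rightarrow> (nat \<Rightarrow> 's \<Rightarrow> 'a) \<Rightarrow> bool" where
  "optimal_policy Pk R H pol \<longleftrightarrow> (\<forall>h<H. \<forall>s. Vpi Pk R H pol h s = Vopt Pk R H h s)"

definition anchor_kernel :: "nat \<Rightarrow> (nat \<Rightarrow> 's \<Rightarrow> 'a \<Rightarrow> real) \<Rightarrow> (nat \<Rightarrow> 's \<Rightarrow> real)
      \<Rightarrow> 's \<Rightarrow> 'a \<Rightarrow> 's \<Rightarrow> real" where
  "anchor_kernel K lam PK s'' a'' s' = (\<Sum>k<K. lam k s'' a'' * PK k s')"

definition empirical :: "nat \<Rightarrow> (nat \<Rightarrow> 's) \<Rightarrow> 's \<Rightarrow> real" where
  "empirical N samp s' = real (card {i. i < N \<and> samp i = s'}) / real N"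

end

theory Submission
  imports Defs
begin

text \<open>The empirical kernel splits as
  \<open>Phat(x,b) = Ptil(x,b) + \<lambda>\<^sub>j(x,b) (PhatK\<^sub>j - P(s,a))\<close>.  Hence a Bellman
  step in the empirical model under any policy equals a step in the auxiliary model
  whose reward is shifted by \<open>\<lambda>\<^sub>j(x,b) u\<^sub>h\<close>, where \<open>u\<^sub>h\<close> integrates the row
  difference against the next value function; backward induction then identifies all
  value and Q-functions.  An optimal policy of the empirical model is greedy for its
  own Q-function, greediness carries over to the auxiliary model through this
  identification, and a greedy policy dominates every policy.  The bound on \<open>u\<^sub>h\<close>
  holds because both rows are distributions and values at step \<open>h+1\<close> lie in
  \<open>[0, H-h-1]\<close>.\<close>

definition distribution :: "('s::finite \<Rightarrow> real) \<Rightarrow> bool" where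
  "distribution p \<longleftrightarrow> (\<forall>y. 0 \<le> p y) \<and> (\<Sum>y\<in>UNIV. p y) = 1"

lemma expectation_bounds:
  assumes "distribution p" and "\<And>y. 0 \<le> V y \<and> V y \<le> B"
  shows "0 \<le> (\<Sum>y\<in>UNIV. p y * V y) \<and> (\<Sum>y\<in>UNIV. p y * V y) \<le> B"
proof
  show "0 \<le> (\<Sum>y\<in>UNIV. p y * V y)"
    using assms by (simp add: distribution_def sum_nonneg)
  have "(\<Sum>y\<in>UNIV. p y * V y) \<le> (\<Sum>y\<in>UNIV. p y * B)"
    using assms by (intro sum_mono mult_left_mono) (auto simp: distribution_def)
  also have "\<dots> = B"
    using assms by (simp add: distribution_def flip: sum_distrib_right)
  finally show "(\<Sum>y\<in>UNIV. p y * V y) \<le> B" .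
qed

lemma abs_expectation_diff_le:
  assumes "distribution p" "distribution q" and "\<And>y. 0 \<le> V y \<and> V y \<le> B"
  shows "\<bar>\<Sum>y\<in>UNIV. (p y - q y) * V y\<bar> \<le> B"
proof -
  have "(\<Sum>y\<in>UNIV. (p y - q y) * V y) = (\<Sum>y\<in>UNIV. p y * V y) - (\<Sum>y\<in>UNIV. q y * V y)"
    by (simp add: left_diff_distrib sum_subtractf)
  moreover have "0 \<le> (\<Sum>y\<in>UNIV. p y * V y) \<and> (\<Sum>y\<in>UNIV. p y * V y) \<le> B"
    using assms(1,3) by (rule expectation_bounds)
  moreover have "0 \<le> (\<Sum>y\<in>UNIV. q y * V y) \<and> (\<Sum>y\<in>UNIV. q y * V y) \<le> B"
    using assms(2,3) by (rule expectation_bounds)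
  ultimately show ?thesis by linarith
qed

lemma expectation_shift:
  fixes p p' d V :: "'s::finite \<Rightarrow> real"
  assumes "\<And>y. p y = p' y + c * d y"
  shows "(\<Sum>y\<in>UNIV. p y * V y) = (\<Sum>y\<in>UNIV. p' y * V y) + (\<Sum>y\<in>UNIV. d y * V y) * c"
proof -
  have "(\<Sum>y\<in>UNIV. p y * V y) = (\<Sum>y\<in>UNIV. p' y * V y + d y * V y * c)"
    by (simp add: assms algebra_simps)
  then show ?thesis
    by (simp add: sum.distrib sum_distrib_right)
qed

lemma distribution_empirical:
  assumes "N > 0"
  shows "distribution (empirical N samp)"
proof -
  have card_eq: "real (card {i. i < N \<and> samp i = y}) = (\<Sum>i<N. if samp i = y then 1 else 0)" for y
  proof -
    have "{i. i < N \<and> samp i = y} = {i\<in>{..<N}. samp i = y}" by auto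
    then show ?thesis by (simp add: sum.If_cases Int_def)
  qed
  have "(\<Sum>y\<in>UNIV. real (card {i. i < N \<and> samp i = y}))
        = (\<Sum>i<N. \<Sum>y\<in>UNIV. if samp i = y then 1 else 0)"
    unfolding card_eq by (rule sum.swap)
  also have "\<dots> = real N" by simp
  finally show ?thesis
    using assms by (simp add: distribution_def empirical_def flip: sum_divide_distrib)
qed

lemma distribution_anchor_kernel:
  assumes "\<And>k. k < K \<Longrightarrow> 0 \<le> lam k x b" and "(\<Sum>k<K. lam k x b) = 1"
    and "\<And>k. k < K \<Longrightarrow> distribution (PK k)"
  shows "distribution (anchor_kernel K lam PK x b)"
proof -
  have "(\<Sum>y\<in>UNIV. anchor_kernel K lam PK x b y) = (\<Sum>k<K. lam k x b * (\<Sum>y\<in>UNIV. PK k y))"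
    unfolding anchor_kernel_def by (simp add: sum.swap[of _ "{..<K}"] sum_distrib_left)
  also have "\<dots> = 1"
    using assms(2,3) by (simp add: distribution_def)
  finally show ?thesis
    using assms unfolding distribution_def anchor_kernel_def
    by (auto intro!: sum_nonneg)
qed

lemma anchor_kernel_fun_upd:
  assumes "j < K"
  shows "anchor_kernel K lam PK x b y
         = anchor_kernel K lam (PK(j := q)) x b y + lam j x b * (PK j y - q y)"
proof -
  have "anchor_kernel K lam PK x b y = lam j x b * PK j y + (\<Sum>k\<in>{..<K}-{j}. lam k x b * PK k y)"
   and "anchor_kernel K lam (PK(j := q)) x b y = lam j x b * q y + (\<Sum>k\<in>{..<K}-{j}. lam k x b * PK k y)"
    unfolding anchor_kernel_def using assms by (simp_all add: sum.remove)
  then show ?thesis by (simp add: algebra_simps)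
qed

lemma Vpi_step:
  "h < H \<Longrightarrow> Vpi Pk R H pol h x
     = R h x (pol h x) + (\<Sum>y\<in>UNIV. Pk x (pol h x) y * Vpi Pk R H pol (Suc h) y)"
  by (subst Vpi.simps) simp

lemma Vpi_horizon: "\<not> h < H \<Longrightarrow> Vpi Pk R H pol h x = 0"
  by (subst Vpi.simps) simp

declare Vpi.simps [simp del]

lemma Vpi_cong_tail:
  "(\<And>h'. h \<le> h' \<Longrightarrow> pol h' = pol' h') \<Longrightarrow> Vpi Pk R H pol h x = Vpi Pk R H pol' h x"
proof (induction "H - h" arbitrary: h x rule: less_induct)
  case less
  show ?case
  proof (cases "h < H")
    case True
    have "Vpi Pk R H pol (Suc h) y = Vpi Pk R H pol' (Suc h) y" for y
      using less True by (intro less.hyps) auto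
    then show ?thesis
      using True less.prems[of h] by (simp add: Vpi_step)
  qed (simp add: Vpi_horizon)
qed

lemma Vpi_bounds:
  assumes "\<And>x b. distribution (Pk x b)" and "\<And>h x b. 0 \<le> R h x b \<and> R h x b \<le> 1"
  shows "0 \<le> Vpi Pk R H pol h x \<and> Vpi Pk R H pol h x \<le> real (H - h)"
proof (induction "H - h" arbitrary: h x rule: less_induct)
  case less
  show ?case
  proof (cases "h < H")
    case True
    have "0 \<le> Vpi Pk R H pol (Suc h) y \<and> Vpi Pk R H pol (Suc h) y \<le> real (H - Suc h)" for y
      using True by (intro less.hyps) auto
    then have "0 \<le> (\<Sum>y\<in>UNIV. Pk x (pol h x) y * Vpi Pk R H pol (Suc h) y)
               \<and> (\<Sum>y\<in>UNIV. Pk x (pol h x) y * Vpi Pk R H pol (Suc h) y) \<le> real (H - Suc h)"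
      by (rule expectation_bounds[OF assms(1)])
    moreover have "real (H - h) = 1 + real (H - Suc h)"
      using True by simp
    ultimately show ?thesis
      using True assms(2)[of h x "pol h x"] by (simp add: Vpi_step)
  qed (simp add: Vpi_horizon)
qed

lemma Vpi_kernel_shift:
  assumes "\<And>x b y. Pk x b y = Pk' x b y + c x b * d y"
  shows "Vpi Pk R H pol h x
         = Vpi Pk' (\<lambda>h x b. R h x b + (\<Sum>y\<in>UNIV. d y * Vpi Pk R H pol (Suc h) y) * c x b) H pol h x"
proof (induction "H - h" arbitrary: h x rule: less_induct)
  case less
  let ?R' = "\<lambda>h x b. R h x b + (\<Sum>y\<in>UNIV. d y * Vpi Pk R H pol (Suc h) y) * c x b"
  show ?case
  proof (cases "h < H")
    case True
    define b where "b = pol h x"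
    have IH: "Vpi Pk R H pol (Suc h) y = Vpi Pk' ?R' H pol (Suc h) y" for y
      using True by (intro less.hyps) auto
    have "Vpi Pk R H pol h x = R h x b + (\<Sum>y\<in>UNIV. Pk x b y * Vpi Pk R H pol (Suc h) y)"
      using True by (simp add: Vpi_step b_def)
    also have "\<dots> = ?R' h x b + (\<Sum>y\<in>UNIV. Pk' x b y * Vpi Pk R H pol (Suc h) y)"
      using expectation_shift[of "Pk x b" "Pk' x b" "c x b" d, OF assms] by simp
    also have "\<dots> = Vpi Pk' ?R' H pol h x"
      using True by (simp add: Vpi_step b_def IH)
    finally show ?thesis .
  qed (simp add: Vpi_horizon)
qed

lemma Qpi_kernel_shift:
  assumes "\<And>x b y. Pk x b y = Pk' x b y + c x b * d y"
  shows "Qpi Pk R H pol h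
         = Qpi Pk' (\<lambda>h x b. R h x b + (\<Sum>y\<in>UNIV. d y * Vpi Pk R H pol (Suc h) y) * c x b) H pol h"
proof (intro ext)
  fix x b
  show "Qpi Pk R H pol h x b = Qpi Pk' (\<lambda>h x b. R h x b + (\<Sum>y\<in>UNIV. d y * Vpi Pk R H pol (Suc h) y) * c x b) H pol h x b"
    unfolding Qpi_def Vpi_kernel_shift[OF assms, symmetric]
    using expectation_shift[of "Pk x b" "Pk' x b" "c x b" d, OF assms] by simp
qed

lemma Qpi_mono:
  assumes "\<And>x b y. 0 \<le> Pk x b y"
    and "\<And>y. Vpi Pk R H pol (Suc h) y \<le> Vpi Pk R H pol' (Suc h) y"
  shows "Qpi Pk R H pol h x b \<le> Qpi Pk R H pol' h x b"
  unfolding Qpi_def using assms by (simp add: sum_mono mult_left_mono)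

lemma Qopt_eq_Qpi_of_dominating:
  assumes "\<And>pol x b. Qpi Pk R H pol h x b \<le> Qpi Pk R H pol' h x b"
  shows "Qopt Pk R H h = Qpi Pk R H pol' h"
proof (intro ext)
  fix x b
  have "(SUP pol. Qpi Pk R H pol h x b) = Qpi Pk R H pol' h x b"
    using assms by (intro antisym cSUP_least cSUP_upper bdd_aboveI2) auto
  then show "Qopt Pk R H h x b = Qpi Pk R H pol' h x b"
    unfolding Qopt_def .
qed

lemma Vopt_eq_Vpi_optimal:
  assumes "optimal_policy Pk R H pol'"
  shows "Vopt Pk R H h x = Vpi Pk R H pol' h x"
  using assms by (cases "h < H") (simp_all add: optimal_policy_def Vopt_def Vpi_horizon)

lemma Vpi_le_optimal:
  assumes "\<And>x b. distribution (Pk x b)" and "\<And>h x b. 0 \<le> R h x b \<and> R h x b \<le> 1"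
    and "optimal_policy Pk R H pol'"
  shows "Vpi Pk R H pol h x \<le> Vpi Pk R H pol' h x"
proof -
  have "bdd_above (range (\<lambda>pol. Vpi Pk R H pol h x))"
    using Vpi_bounds[of Pk R] assms(1,2) by (intro bdd_aboveI2[where M = "real (H - h)"]) blast
  then have "Vpi Pk R H pol h x \<le> Vopt Pk R H h x"
    unfolding Vopt_def by (rule cSUP_upper[OF UNIV_I])
  then show ?thesis
    using Vopt_eq_Vpi_optimal[OF assms(3)] by simp
qed

lemma Qpi_le_Vpi_optimal:
  assumes "\<And>x b. distribution (Pk x b)" and "\<And>h x b. 0 \<le> R h x b \<and> R h x b \<le> 1"
    and "optimal_policy Pk R H pol'" and "h < H"
  shows "Qpi Pk R H pol' h x b \<le> Vpi Pk R H pol' h x"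
proof -
  define pol where "pol = pol'(h := (\<lambda>_. b))"
  have "Vpi Pk R H pol (Suc h) y = Vpi Pk R H pol' (Suc h) y" for y
    by (rule Vpi_cong_tail) (simp add: pol_def)
  then have "Vpi Pk R H pol h x = Qpi Pk R H pol' h x b"
    using assms(4) by (simp add: Vpi_step Qpi_def pol_def)
  then show ?thesis
    using Vpi_le_optimal[of Pk R H pol' pol h x] assms(1-3) by simp
qed

lemma Vpi_le_of_greedy:
  assumes "\<And>x b y. 0 \<le> Pk x b y"
    and greedy: "\<And>h x b. h < H \<Longrightarrow> Qpi Pk R H pol' h x b \<le> Vpi Pk R H pol' h x"
  shows "Vpi Pk R H pol h x \<le> Vpi Pk R H pol' h x"
proof (induction "H - h" arbitrary: h x rule: less_induct)
  case less
  show ?case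
  proof (cases "h < H")
    case True
    have "Vpi Pk R H pol (Suc h) y \<le> Vpi Pk R H pol' (Suc h) y" for y
      using True by (intro less.hyps) auto
    then have "Qpi Pk R H pol h x (pol h x) \<le> Qpi Pk R H pol' h x (pol h x)"
      by (rule Qpi_mono[OF assms(1)])
    also have "\<dots> \<le> Vpi Pk R H pol' h x"
      using greedy True by blast
    finally show ?thesis
      using True by (simp add: Vpi_step Qpi_def)
  qed (simp add: Vpi_horizon)
qed

lemma Qopt_eq_Qpi_of_greedy:
  assumes "\<And>x b y. 0 \<le> Pk x b y"
    and "\<And>h x b. h < H \<Longrightarrow> Qpi Pk R H pol' h x b \<le> Vpi Pk R H pol' h x"
  shows "Qopt Pk R H h = Qpi Pk R H pol' h"
  using Vpi_le_of_greedy[OF assms] by (intro Qopt_eq_Qpi_of_dominating Qpi_mono[OF assms(1)])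

lemma Qopt_eq_Qpi_optimal:
  assumes "\<And>x b. distribution (Pk x b)" and "\<And>h x b. 0 \<le> R h x b \<and> R h x b \<le> 1"
    and "optimal_policy Pk R H pol'"
  shows "Qopt Pk R H h = Qpi Pk R H pol' h"
  using assms
  by (intro Qopt_eq_Qpi_of_dominating Qpi_mono Vpi_le_optimal) (auto simp: distribution_def)

lemma abs_value_discrepancy_le:
  assumes "distribution p" and "distribution q"
    and "\<And>x b. distribution (Pk x b)" and "\<And>h x b. 0 \<le> R h x b \<and> R h x b \<le> 1"
    and "h < H"
  shows "\<bar>\<Sum>y\<in>UNIV. (p y - q y) * Vpi Pk R H pol (Suc h) y\<bar> \<le> real H - real h - 1"
proof -
  have "0 \<le> Vpi Pk R H pol (Suc h) y \<and> Vpi Pk R H pol (Suc h) y \<le> real H - real h - 1" for y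
    using Vpi_bounds[of Pk R H pol "Suc h" y] assms(3-5) by auto
  with assms(1,2) show ?thesis
    by (rule abs_expectation_diff_le)
qed

theorem lemma18:
  fixes P :: "'s::finite \<Rightarrow> 'a::finite \<Rightarrow> 's \<Rightarrow> real"
    and r :: "'s \<Rightarrow> 'a \<Rightarrow> real"
    and H K N j :: nat
    and \<phi> :: "'s \<Rightarrow> 'a \<Rightarrow> nat \<Rightarrow> real" and \<psi> :: "nat \<Rightarrow> 's \<Rightarrow> real"
    and sk :: "nat \<Rightarrow> 's" and ak :: "nat \<Rightarrow> 'a"
    and lam :: "nat \<Rightarrow> 's \<Rightarrow> 'a \<Rightarrow> real"
    and samp :: "nat \<Rightarrow> nat \<Rightarrow> 's"
    and pol pihat :: "nat \<Rightarrow> 's \<Rightarrow> 'a"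
    and PhatK :: "nat \<Rightarrow> 's \<Rightarrow> real"
    and Phat Ptil :: "'s \<Rightarrow> 'a \<Rightarrow> 's \<Rightarrow> real"
    and s :: 's and a :: 'a
    and Rtil :: "(nat \<Rightarrow> real) \<Rightarrow> nat \<Rightarrow> 's \<Rightarrow> 'a \<Rightarrow> real"
    and upi ustar :: "nat \<Rightarrow> real"
  assumes P_nonneg: "\<And>s a s'. P s a s' \<ge> 0"
    and P_sum: "\<And>s a. (\<Sum>s'\<in>UNIV. P s a s') = 1"
    and r_range: "\<And>s a. 0 \<le> r s a \<and> r s a \<le> 1"
    and lowrank: "\<And>s a s'. P s a s' = (\<Sum>k<K. \<phi> s a k * \<psi> k s')"
    and lam_nonneg: "\<And>k s a. k < K \<Longrightarrow> lam k s a \<ge> 0"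
    and lam_sum: "\<And>s a. (\<Sum>k<K. lam k s a) = 1"
    and anchor: "\<And>s a i. i < K \<Longrightarrow> \<phi> s a i = (\<Sum>k<K. lam k s a * \<phi> (sk k) (ak k) i)"
    and N_pos: "N > 0"
    and j_lt: "j < K"
    and pihat_opt: "optimal_policy Phat (\<lambda>h. r) H pihat"
    and PhatK_def: "PhatK = (\<lambda>k. empirical N (samp k))"
    and Phat_def: "Phat = anchor_kernel K lam PhatK"
    and s_def: "s = sk j" and a_def: "a = ak j"
    and Ptil_def: "Ptil = anchor_kernel K lam (\<lambda>k s'. if k = j then P s a s' else PhatK k s')"
    and Rtil_def: "Rtil = (\<lambda>u h s'' a''. r s'' a'' + u h * lam j s'' a'')"
    and upi_def: "upi = (\<lambda>h. \<Sum>s'\<in>UNIV. (PhatK j s' - P s a s') * Vpi Phat (\<lambda>h. r) H pol (Suc h) s')"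
    and ustar_def: "ustar = (\<lambda>h. \<Sum>s'\<in>UNIV. (PhatK j s' - P s a s') * Vopt Phat (\<lambda>h. r) H (Suc h) s')"
  shows "\<forall>h<H.
           Qpi Phat (\<lambda>h. r) H pol h = Qpi Ptil (Rtil upi) H pol h
         \<and> Qopt Phat (\<lambda>h. r) H h = Qpi Ptil (Rtil ustar) H pihat h
         \<and> Qpi Ptil (Rtil ustar) H pihat h = Qopt Ptil (Rtil ustar) H h
         \<and> \<bar>upi h\<bar> \<le> real H - real h - 1
         \<and> \<bar>ustar h\<bar> \<le> real H - real h - 1"
proof -
  let ?r = "\<lambda>h::nat. r"
  let ?d = "\<lambda>y. PhatK j y - P s a y"
  have PhatK_distr: "distribution (PhatK k)" for k
    unfolding PhatK_def using N_pos by (rule distribution_empirical)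
  have P_distr: "distribution (P x b)" for x b
    using P_nonneg P_sum by (simp add: distribution_def)
  have Phat_distr: "distribution (Phat x b)" for x b
    unfolding Phat_def using lam_nonneg lam_sum PhatK_distr by (rule distribution_anchor_kernel)
  have Ptil_eq: "Ptil = anchor_kernel K lam (PhatK(j := P s a))"
    unfolding Ptil_def by (intro arg_cong[where f = "anchor_kernel K lam"]) (simp add: fun_eq_iff)
  have Ptil_nonneg: "0 \<le> Ptil x b y" for x b y
    using distribution_anchor_kernel[of K lam x b "PhatK(j := P s a)"] lam_nonneg lam_sum
      PhatK_distr P_distr unfolding Ptil_eq distribution_def by auto
  have shift: "Phat x b y = Ptil x b y + lam j x b * ?d y" for x b y
    unfolding Phat_def Ptil_eq using j_lt by (rule anchor_kernel_fun_upd)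
  have Q_pol: "Qpi Phat ?r H pol h = Qpi Ptil (Rtil upi) H pol h" for h
    unfolding upi_def Rtil_def by (rule Qpi_kernel_shift[OF shift])
  have ustar_eq: "ustar = (\<lambda>h. \<Sum>y\<in>UNIV. ?d y * Vpi Phat ?r H pihat (Suc h) y)"
    unfolding ustar_def Vopt_eq_Vpi_optimal[OF pihat_opt] ..
  have Q_pihat: "Qpi Phat ?r H pihat h = Qpi Ptil (Rtil ustar) H pihat h" for h
    unfolding ustar_eq Rtil_def by (rule Qpi_kernel_shift[OF shift])
  have V_pihat: "Vpi Phat ?r H pihat h x = Vpi Ptil (Rtil ustar) H pihat h x" for h x
    unfolding ustar_eq Rtil_def by (rule Vpi_kernel_shift[OF shift])
  have Qopt_hat: "Qopt Phat ?r H h = Qpi Phat ?r H pihat h" for h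
    using Phat_distr r_range pihat_opt by (rule Qopt_eq_Qpi_optimal)
  have "Qpi Ptil (Rtil ustar) H pihat h x b \<le> Vpi Ptil (Rtil ustar) H pihat h x" if "h < H" for h x b
    using Qpi_le_Vpi_optimal[of Phat ?r H pihat h x b] Phat_distr r_range pihat_opt that
    unfolding Q_pihat V_pihat by blast
  then have Qopt_til: "Qopt Ptil (Rtil ustar) H h = Qpi Ptil (Rtil ustar) H pihat h" for h
    using Ptil_nonneg by (intro Qopt_eq_Qpi_of_greedy)
  have u_bound: "\<bar>\<Sum>y\<in>UNIV. ?d y * Vpi Phat ?r H pol' (Suc h) y\<bar> \<le> real H - real h - 1"
    if "h < H" for pol' h
    using PhatK_distr P_distr Phat_distr r_range that by (rule abs_value_discrepancy_le)
  show ?thesis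
    using Q_pol Qopt_hat Q_pihat Qopt_til u_bound unfolding upi_def ustar_eq by simp
qed

end
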